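(* Let $\Delta$ be a Laplacian admitting spectral decimation with spectral decimation function $R$, normalization constant $c_\Delta=R'(0)>1$, and exceptional (forbidden) set $E$ (see context). Suppose $b$ is a real number dominating all forbidden eigenvalues and $R^{-1}[0,b]\subseteq[0,b]$. Let $\{\phi_j\}_{j=0}^L$ be the partial inverses of $R$, ordered so that $\max\phi_i\le\min\phi_{i+1}$. Assume $\phi_0(b)<b$ and $\phi_0$ is strictly convex. If for some $0\le J<L$ $$M:=\max\phi_J|_{[0,b]}<\min\phi_{J+1}|_{[0,b]}=:m,$$ then there exist gaps in the spectrum of $\Delta$. In fact, there is a bound, independent of $k$, on the number of elements of the spectrum in the intervals $(A_k,B_k)$, $k\ge0$, where $$A_k=c_\Delta^{k}\lim_{n\to\infty}c_\Delta^{n}\phi_0^{(n-1)}(M)=\lim_{n\to\infty}c_\Delta^{n}\phi_0^{(n-k-1)}(M),\qquad B_k=c_\Delta^{k}\lim_{n\to\infty}c_\Delta^{n}\phi_0^{(n-1)}(m)=\lim_{n\to\infty}c_\Delta^{n}\phi_0^{(n-k-1)}(m).$$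
   Context: Setting: a self-similar fractal approximated by graphs with discrete Laplacians $\Delta_n$ (matrices $M_n$), where $M_1=\begin{pmatrix}A&B\\C&D\end{pmatrix}$ (block of level-0 vertices first), $S(z)=(1-z)A-B(D-z)^{-1}C=\phi(z)(M_0-R(z))$ with scalar rational functions $\phi$, $R$; $R(0)=0$ and $c_\Delta=R'(0)>1$. The exceptional (forbidden) set is $E=\sigma(D)\cup\{z:\phi(z)=0\}$. The partial inverses $\phi_0,\dots,\phi_L$ of $R$ are its inverse branches, with $\phi_0$ the one having $0$ in its range; $\phi_0^{(n)}$ is the $n$-fold composition and $\phi_w=\phi_{w_n}\circ\cdots\circ\phi_{w_1}$ for a word $w=w_n\dots w_1$. The Laplacian $\Delta u=\lim_n c_\Delta^n\Delta_nu$ admits spectral decimation if all its eigenvalues are of the form $c_\Delta^{i}\lim_{n\to\infty}c_\Delta^{n+j}\phi_0^{(n)}\circ\phi_w(x)$ with $x\in\sigma(\Delta_i)\cup E$, $i\ge0$, $|w|=j$. Gaps in the spectrum means: listing the eigenvalues as $0\le\lambda_1\le\lambda_2\le\cdots$, $\limsup_k\lambda_{k+1}/\lambda_k>1$. *)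

theory Defs
  imports "HOL-Analysis.Analysis" "HOL-Computational_Algebra.Polynomial"
begin

definition strictly_convex_on :: "real set \<Rightarrow> (real \<Rightarrow> real) \<Rightarrow> bool" where
  "strictly_convex_on S f \<longleftrightarrow>
     (\<forall>x\<in>S. \<forall>y\<in>S. \<forall>t::real. x \<noteq> y \<and> 0 < t \<and> t < 1 \<longrightarrow>
        f (t * x + (1 - t) * y) < t * f x + (1 - t) * f y)"

definition real_rational_fun :: "(real \<Rightarrow> real) \<Rightarrow> bool" where
  "real_rational_fun R \<longleftrightarrow>
     (\<exists>p q :: real poly. q \<noteq> 0 \<and> (\<forall>x. poly q x \<noteq> 0 \<longrightarrow> R x = poly p x / poly q x))"

definition partial_inverses ::
  "(real \<Rightarrow> real) \<Rightarrow> real \<Rightarrow> nat \<Rightarrow> (nat \<Rightarrow> real \<Rightarrow> real) \<Rightarrow> bool" where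
  "partial_inverses R b L \<phi> \<longleftrightarrow>
     (\<forall>j\<le>L. continuous_on {0..b} (\<phi> j) \<and> (\<forall>y\<in>{0..b}. R (\<phi> j y) = y)) \<and>
     {x. R x \<in> {0..b}} = (\<Union>j\<le>L. \<phi> j ` {0..b}) \<and>
     0 \<in> \<phi> 0 ` {0..b} \<and>
     (\<forall>i<L. \<forall>x\<in>{0..b}. \<forall>y\<in>{0..b}. \<phi> i x \<le> \<phi> (Suc i) y)"

fun phi_word :: "(nat \<Rightarrow> real \<Rightarrow> real) \<Rightarrow> nat list \<Rightarrow> real \<Rightarrow> real" where
  "phi_word \<phi> [] = id"
| "phi_word \<phi> (a # w) = \<phi> a \<circ> phi_word \<phi> w"

definition decimation_values ::
  "real \<Rightarrow> nat \<Rightarrow> (nat \<Rightarrow> real \<Rightarrow> real) \<Rightarrow> (nat \<Rightarrow> real set) \<Rightarrow> real set \<Rightarrow> real set" where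
  "decimation_values c L \<phi> \<sigma> E =
     {lam. \<exists>i w x l. x \<in> \<sigma> i \<union> E \<and> set w \<subseteq> {..L} \<and>
        ((\<lambda>n. c ^ (n + length w) * (\<phi> 0 ^^ n) (phi_word \<phi> w x)) \<longlonglongrightarrow> l) \<and>
        lam = c ^ i * l}"

text \<open>Delta (with eigenvalues ev 0 \<le> ev 1 \<le> ..., listed with multiplicity) admits
  spectral decimation: every eigenvalue is one of the decimation values.\<close>
definition admits_spectral_decimation ::
  "(nat \<Rightarrow> real) \<Rightarrow> real \<Rightarrow> nat \<Rightarrow> (nat \<Rightarrow> real \<Rightarrow> real) \<Rightarrow> (nat \<Rightarrow> real set) \<Rightarrow> real set \<Rightarrow> bool" where
  "admits_spectral_decimation ev c L \<phi> \<sigma> E \<longleftrightarrow> range ev \<subseteq> decimation_values c L \<phi> \<sigma> E"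

definition has_spectral_gaps :: "(nat \<Rightarrow> real) \<Rightarrow> bool" where
  "has_spectral_gaps ev \<longleftrightarrow> limsup (\<lambda>k. ereal (ev (Suc k) / ev k)) > 1"

end

theory Submission
  imports Defs
begin

text \<open>Because phi_0 is a strictly convex contraction of [0, b] fixing 0 and R(x) = c x + O(x^2),
  the renormalized iterates c^n phi_0^n(y) increase to a finite limit Phi(y); Phi is strictly
  increasing and satisfies c Phi(phi_0 y) = Phi(y). An eigenvalue is c^q Phi(phi_w e) with e in
  the finite set sigma_0 \<union> E. Peeling outer letters 0 off w either exhausts w, leaving c^q Phi(e),
  or reaches a letter a \<noteq> 0; then phi_a lands in [phi_0 b, M] or in [m, b], and since
  Phi(b) = c Phi(phi_0 b) the value avoids every interval (c^k c Phi(M), c^k c Phi(m)). So these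
  intervals of fixed ratio contain boundedly many eigenvalues, which forces infinitely many
  ratios ev(k+1)/ev(k) above a fixed r > 1.\<close>

section \<open>Rational functions near 0\<close>

lemma poly_quotient_tendsto_0_imp_linear_bound:
  fixes p q :: "real poly"
  assumes q: "q \<noteq> 0" and lim: "((\<lambda>x. poly p x / poly q x) \<longlongrightarrow> 0) (at 0)"
  shows "\<exists>K. \<forall>\<^sub>F x in at 0. \<bar>poly p x / poly q x\<bar> \<le> K * \<bar>x\<bar>"
proof (cases "p = 0")
  case True
  then show ?thesis by (auto intro!: exI[of _ 0])
next
  case p: False
  obtain p1 where p1: "p = [:-0,1:] ^ order 0 p * p1" "\<not> [:-0,1:] dvd p1"
    using order_decomp[OF p] by blast
  obtain q1 where q1: "q = [:-0,1:] ^ order 0 q * q1" "\<not> [:-0,1:] dvd q1"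
    using order_decomp[OF q] by blast
  define s t where "s = order 0 p" and "t = order 0 q"
  have p1_0: "poly p1 0 \<noteq> 0" and q1_0: "poly q1 0 \<noteq> 0"
    using p1(2) q1(2) by (auto simp: poly_eq_0_iff_dvd)
  have quotient: "poly p x / poly q x = x ^ s * poly p1 x / (x ^ t * poly q1 x)" for x
    by (subst p1(1), subst q1(1)) (simp add: poly_power s_def t_def)
  have cont: "isCont (\<lambda>x. x ^ n * poly p1 x / poly q1 x) 0" for n
    using q1_0 by (intro continuous_intros) auto
  have "t < s"
  proof (rule ccontr)
    assume "\<not> t < s"
    then have "x ^ (t - s) * (poly p x / poly q x) = poly p1 x / poly q1 x" if "x \<noteq> 0" for x
      using that by (simp add: quotient power_diff)
    then have "\<forall>\<^sub>F x in at 0. x ^ (t - s) * (poly p x / poly q x) = poly p1 x / poly q1 x"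
      by (auto simp: eventually_at_filter)
    moreover have "((\<lambda>x. x ^ (t - s) * (poly p x / poly q x)) \<longlongrightarrow> 0 ^ (t - s) * 0) (at 0)"
      by (intro tendsto_intros lim)
    ultimately have "((\<lambda>x. poly p1 x / poly q1 x) \<longlongrightarrow> 0) (at 0)"
      by (simp add: Lim_transform_eventually)
    moreover have "((\<lambda>x. poly p1 x / poly q1 x) \<longlongrightarrow> poly p1 0 / poly q1 0) (at 0)"
      using cont[of 0] by (simp add: isCont_def)
    ultimately show False
      using p1_0 q1_0 tendsto_unique[OF at_neq_bot] by fastforce
  qed
  define g where "g x = x ^ (s - t - 1) * poly p1 x / poly q1 x" for x
  have quotient_g: "poly p x / poly q x = x * g x" if "x \<noteq> 0" for x
  proof -
    have "x ^ s = x * x ^ (s - t - 1) * x ^ t"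
      using \<open>t < s\<close> by (simp flip: power_Suc power_add)
    then show ?thesis
      using that by (simp add: quotient g_def)
  qed
  have "\<forall>\<^sub>F x in at 0. dist (g x) (g 0) < 1"
    using cont[of "s - t - 1"] unfolding g_def isCont_def by (rule tendstoD) simp
  then have "\<forall>\<^sub>F x in at 0. \<bar>g x\<bar> \<le> \<bar>g 0\<bar> + 1"
    by (rule eventually_mono) (simp add: dist_real_def)
  then have "\<forall>\<^sub>F x in at 0. \<bar>poly p x / poly q x\<bar> \<le> (\<bar>g 0\<bar> + 1) * \<bar>x\<bar>"
    unfolding eventually_at_filter
    by (rule eventually_mono) (auto simp: quotient_g abs_mult mult.commute intro: mult_left_mono)
  then show ?thesis by blast
qed

lemma real_rational_fun_quadratic_remainder:
  assumes rat: "real_rational_fun R" and R0: "R 0 = 0"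
    and deriv: "(R has_real_derivative c) (at 0)"
  shows "\<exists>K. \<forall>\<^sub>F x in at 0. \<bar>R x - c * x\<bar> \<le> K * x\<^sup>2"
proof -
  obtain p q where q: "q \<noteq> 0" and R_pq: "\<And>x. poly q x \<noteq> 0 \<Longrightarrow> R x = poly p x / poly q x"
    using rat unfolding real_rational_fun_def by blast
  define D Q where "D = p - smult c ([:0, 1:] * q)" and "Q = [:0, 1:] * q"
  have "\<forall>\<^sub>F x in at 0. x \<notin> {x. poly q x = 0}"
    using islimpt_finite[OF poly_roots_finite[OF q]] islimpt_iff_eventually by blast
  then have quotient: "\<forall>\<^sub>F x in at 0. (R x - c * x) / x = poly D x / poly Q x"
    unfolding eventually_at_filter
    by (rule eventually_mono) (auto simp: R_pq D_def Q_def field_simps)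
  have "((\<lambda>x. (R x - R 0) / (x - 0) - c) \<longlongrightarrow> 0) (at 0)"
    using deriv by (intro LIM_zero) (simp add: has_field_derivative_iff)
  then have "((\<lambda>x. (R x - c * x) / x) \<longlongrightarrow> 0) (at 0)"
    by (rule Lim_transform_eventually)
      (auto simp: R0 eventually_at_filter diff_divide_distrib)
  then have "((\<lambda>x. poly D x / poly Q x) \<longlongrightarrow> 0) (at 0)"
    using quotient by (rule tendsto_cong[THEN iffD1, rotated])
  moreover have "Q \<noteq> 0"
    using q by (simp add: Q_def)
  ultimately obtain K where "\<forall>\<^sub>F x in at 0. \<bar>poly D x / poly Q x\<bar> \<le> K * \<bar>x\<bar>"
    using poly_quotient_tendsto_0_imp_linear_bound by blast
  with quotient have "\<forall>\<^sub>F x in at 0. \<bar>R x - c * x\<bar> \<le> K * x\<^sup>2"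
    unfolding eventually_at_filter
  proof eventually_elim
    case (elim x)
    show ?case
    proof (cases "x = 0")
      case False
      then have "\<bar>R x - c * x\<bar> = \<bar>x\<bar> * \<bar>(R x - c * x) / x\<bar>"
        by (simp add: abs_divide)
      also have "\<dots> \<le> \<bar>x\<bar> * (K * \<bar>x\<bar>)"
        using elim False by (intro mult_left_mono) auto
      finally show ?thesis
        by (simp add: power2_eq_square abs_mult_self_eq mult.left_commute)
    qed (simp add: R0)
  qed
  then show ?thesis by blast
qed

section \<open>Counting eigenvalues in gaps\<close>

text \<open>The gaps of the theorem are the intervals (c^k A, c^k B) with A = c Phi(M), B = c Phi(m).\<close>
definition outside_gaps :: "real \<Rightarrow> real \<Rightarrow> real \<Rightarrow> real \<Rightarrow> bool" where
  "outside_gaps c A B v \<longleftrightarrow> (\<forall>k::nat. v \<notin> {c ^ k * A <..< c ^ k * B})"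

lemma outside_gapsI:
  fixes c A B v :: real
  assumes c: "1 < c" and AB: "0 \<le> A" "0 \<le> B"
    and below: "v \<le> c ^ t * A" and above: "c ^ t * B \<le> c * v"
  shows "outside_gaps c A B v"
  unfolding outside_gaps_def
proof (intro allI notI)
  fix k
  assume v: "v \<in> {c ^ k * A <..< c ^ k * B}"
  show False
  proof (cases "t \<le> k")
    case True
    then have "c ^ t * A \<le> c ^ k * A"
      using c AB by (intro mult_right_mono power_increasing) auto
    with v below show False by simp
  next
    case False
    then have "c ^ Suc k * B \<le> c ^ t * B"
      using c AB by (intro mult_right_mono power_increasing) auto
    with above have "c * (c ^ k * B) \<le> c * v"
      by (simp add: mult.assoc)
    with v c show False by simp
  qed
qed

lemma finite_card_le_of_bounded_diameter:
  fixes S :: "nat set"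
  assumes diam: "\<And>p q. p \<in> S \<Longrightarrow> q \<in> S \<Longrightarrow> p < q \<Longrightarrow> q - p < T"
  shows "finite S \<and> card S \<le> 2 * T + 1"
proof (cases "S = {}")
  case False
  then obtain p0 where p0: "p0 \<in> S" by blast
  have sub: "S \<subseteq> {p0 - T..p0 + T}"
  proof
    fix q assume "q \<in> S"
    then show "q \<in> {p0 - T..p0 + T}"
      using diam[OF \<open>q \<in> S\<close> p0] diam[OF p0 \<open>q \<in> S\<close>] by (cases q p0 rule: linorder_cases) auto
  qed
  then have "card S \<le> card {p0 - T..p0 + T}"
    by (intro card_mono) auto
  also have "\<dots> \<le> 2 * T + 1"
    by simp
  finally show ?thesis
    using sub finite_subset by blast
qed simp

lemma finite_card_powers_in_interval:
  fixes c x lo hi :: real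
  assumes c: "1 < c" and lo: "0 < lo" and hi: "hi \<le> c ^ T * lo"
  shows "finite {p::nat. c ^ p * x \<in> {lo<..<hi}} \<and> card {p::nat. c ^ p * x \<in> {lo<..<hi}} \<le> 2 * T + 1"
proof (rule finite_card_le_of_bounded_diameter)
  fix p q
  assume p: "p \<in> {p. c ^ p * x \<in> {lo<..<hi}}" and q: "q \<in> {p. c ^ p * x \<in> {lo<..<hi}}"
    and "p < q"
  have "0 < c ^ p * x"
    using p lo by auto
  then have x: "0 < x"
    using c by (simp add: zero_less_mult_iff)
  have "c ^ q * x < c ^ T * lo"
    using q hi by auto
  also have "\<dots> < c ^ T * (c ^ p * x)"
    using p c by auto
  finally have "c ^ q < c ^ (T + p)"
    using x by (simp add: power_add mult.assoc)
  then show "q - p < T"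
    using c \<open>p < q\<close> by simp
qed

lemma bounded_counts_in_gaps:
  fixes c A B :: real and X F :: "real set" and g :: "real \<Rightarrow> real"
  assumes c: "1 < c" and A: "0 < A" and F: "finite F"
    and cases: "\<And>v. v \<in> X \<Longrightarrow> (\<exists>e\<in>F. \<exists>p. v = c ^ p * g e) \<or> outside_gaps c A B v"
  shows "\<exists>N. \<forall>k. finite {v \<in> X. c ^ k * A < v \<and> v < c ^ k * B} \<and>
               card {v \<in> X. c ^ k * A < v \<and> v < c ^ k * B} \<le> N"
proof -
  obtain T where "B / A < c ^ T"
    using real_arch_pow[OF c] by blast
  then have T: "c ^ k * B \<le> c ^ T * (c ^ k * A)" for k
    using A c by (simp add: field_simps)
  define P where "P e k = {p::nat. c ^ p * g e \<in> {c ^ k * A<..<c ^ k * B}}" for e k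
  have P: "finite (P e k) \<and> card (P e k) \<le> 2 * T + 1" for e k
    unfolding P_def using c A T by (intro finite_card_powers_in_interval) auto
  have sub: "{v \<in> X. c ^ k * A < v \<and> v < c ^ k * B} \<subseteq> (\<Union>e\<in>F. (\<lambda>p. c ^ p * g e) ` P e k)" for k
    using cases by (fastforce simp: P_def outside_gaps_def)
  have "finite {v \<in> X. c ^ k * A < v \<and> v < c ^ k * B} \<and>
        card {v \<in> X. c ^ k * A < v \<and> v < c ^ k * B} \<le> card F * (2 * T + 1)" for k
  proof -
    have fin: "finite (\<Union>e\<in>F. (\<lambda>p. c ^ p * g e) ` P e k)"
      using F P by auto
    have "card {v \<in> X. c ^ k * A < v \<and> v < c ^ k * B} \<le> card (\<Union>e\<in>F. (\<lambda>p. c ^ p * g e) ` P e k)"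
      using card_mono[OF fin sub] .
    also have "\<dots> \<le> (\<Sum>e\<in>F. card ((\<lambda>p. c ^ p * g e) ` P e k))"
      by (rule card_UN_le[OF F])
    also have "\<dots> \<le> (\<Sum>e\<in>F. 2 * T + 1)"
      using P by (intro sum_mono) (meson card_image_le order_trans)
    finally show ?thesis
      using finite_subset[OF sub fin] by simp
  qed
  then show ?thesis by blast
qed

lemma exists_empty_geometric_bucket:
  fixes X :: "real set" and lo hi r :: real
  assumes lo: "0 < lo" and r: "1 < r" and hi: "lo * r ^ Suc N < hi"
    and count: "finite {v \<in> X. lo < v \<and> v < hi}" "card {v \<in> X. lo < v \<and> v < hi} \<le> N"
  shows "\<exists>s\<le>N. \<forall>v\<in>X. v \<notin> {lo * r ^ s <.. lo * r ^ Suc s}"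
proof (rule ccontr)
  assume "\<not> ?thesis"
  then obtain g where g: "\<And>s. s \<le> N \<Longrightarrow> g s \<in> X \<and> g s \<in> {lo * r ^ s <.. lo * r ^ Suc s}"
    by metis
  have bucket_mono: "lo * r ^ i \<le> lo * r ^ j" if "i \<le> j" for i j
    using lo r that by (intro mult_left_mono power_increasing) auto
  have "inj_on g {..N}"
  proof (rule inj_onI)
    fix s s' assume "s \<in> {..N}" "s' \<in> {..N}" "g s = g s'"
    then show "s = s'"
      using g[of s] g[of s'] bucket_mono[of "Suc s" s'] bucket_mono[of "Suc s'" s]
      by (cases s s' rule: linorder_cases) auto
  qed
  moreover have "g s \<in> {v \<in> X. lo < v \<and> v < hi}" if "s \<le> N" for s
    using g[OF that] bucket_mono[of 0 s] bucket_mono[of "Suc s" "Suc N"] that hi by auto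
  then have "g ` {..N} \<subseteq> {v \<in> X. lo < v \<and> v < hi}"
    by auto
  ultimately have "card {..N} \<le> card {v \<in> X. lo < v \<and> v < hi}"
    using count(1) by (intro card_inj_on_le)
  with count(2) show False
    by simp
qed

lemma exists_large_ratio_above_empty_interval:
  fixes ev :: "nat \<Rightarrow> real"
  assumes unbdd: "filterlim ev at_top sequentially"
    and pos: "\<And>n. n0 \<le> n \<Longrightarrow> 0 < ev n" and r: "0 \<le> r"
    and below: "ev n0 \<le> T" and empty: "\<And>n. ev n \<notin> {T <.. r * T}"
  shows "\<exists>n\<ge>n0. r \<le> ev (Suc n) / ev n"
proof -
  define Q where "Q = {n. ev n \<le> T}"
  obtain n1 where "\<And>n. n1 \<le> n \<Longrightarrow> T + 1 \<le> ev n"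
    using unbdd unfolding filterlim_at_top eventually_sequentially by blast
  then have "Q \<subseteq> {..<n1}"
    by (force simp: Q_def not_le)
  then have Q: "finite Q"
    using finite_subset by blast
  define n where "n = Max Q"
  have n: "ev n \<le> T" "n0 \<le> n"
    using Max_in[OF Q] Max_ge[OF Q] below by (auto simp: n_def Q_def)
  have "Suc n \<notin> Q"
    using Max_ge[OF Q, of "Suc n"] by (auto simp: n_def)
  then have "r * T < ev (Suc n)"
    using empty[of "Suc n"] by (auto simp: Q_def)
  moreover have "r * ev n \<le> r * T"
    using n(1) r by (rule mult_left_mono)
  ultimately have "r * ev n \<le> ev (Suc n)"
    by linarith
  then show ?thesis
    using n pos[of n] by (auto simp: field_simps)
qed

lemma has_spectral_gapsI:
  assumes r: "1 < r" and large: "\<And>n0. \<exists>n\<ge>n0. r \<le> ev (Suc n) / ev n"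
  shows "has_spectral_gaps ev"
proof -
  have "ereal r \<le> (INF n. SUP m\<in>{n..}. ereal (ev (Suc m) / ev m))"
  proof (rule INF_greatest)
    fix n0
    obtain n where "n0 \<le> n" "r \<le> ev (Suc n) / ev n"
      using large by blast
    then show "ereal r \<le> (SUP m\<in>{n0..}. ereal (ev (Suc m) / ev m))"
      by (intro SUP_upper2[of n]) auto
  qed
  moreover have "1 < ereal r"
    using r by simp
  ultimately show ?thesis
    unfolding has_spectral_gaps_def limsup_INF_SUP by (meson less_le_trans)
qed

text \<open>One of the N + 1 sub-buckets of ratio r = (B/A)^(1/(N+2)) of a far-out gap is empty; the
  last eigenvalue below that bucket is followed by a jump of ratio at least r.\<close>
lemma has_spectral_gaps_of_bounded_counts:
  fixes ev :: "nat \<Rightarrow> real" and c A B :: real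
  assumes c: "1 < c" and A: "0 < A" and AB: "A < B"
    and unbdd: "filterlim ev at_top sequentially"
    and counts: "\<And>k. finite {v \<in> range ev. c ^ k * A < v \<and> v < c ^ k * B} \<and>
                       card {v \<in> range ev. c ^ k * A < v \<and> v < c ^ k * B} \<le> N"
  shows "has_spectral_gaps ev"
proof -
  define r where "r = root (N + 2) (B / A)"
  have r: "1 < r" "r ^ (N + 2) = B / A"
    using A AB unfolding r_def by (simp, intro real_root_pow_pos2) auto
  have hi: "c ^ k * A * r ^ Suc N < c ^ k * B" for k
  proof -
    have "c ^ k * A * r ^ Suc N < c ^ k * A * r ^ (N + 2)"
      using A c r by (intro mult_strict_left_mono power_strict_increasing) auto
    also have "\<dots> = c ^ k * B"
      using r A by simp
    finally show ?thesis .
  qed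
  obtain n1 where n1: "\<And>n. n1 \<le> n \<Longrightarrow> 1 \<le> ev n"
    using unbdd unfolding filterlim_at_top eventually_sequentially by blast
  show ?thesis
  proof (rule has_spectral_gapsI[OF r(1)])
    fix n0
    define n2 where "n2 = max n0 n1"
    obtain k where "ev n2 / A < c ^ k"
      using real_arch_pow[OF c] by blast
    then have n2: "ev n2 < c ^ k * A"
      using A by (simp add: field_simps)
    obtain s where "\<forall>v\<in>range ev. v \<notin> {c ^ k * A * r ^ s <.. c ^ k * A * r ^ Suc s}"
      using exists_empty_geometric_bucket[OF _ r(1) hi[of k] conjunct1[OF counts] conjunct2[OF counts]]
        A c by auto
    moreover have "c ^ k * A \<le> c ^ k * A * r ^ s"
      using A c r by simp
    ultimately obtain n where "n2 \<le> n" "r \<le> ev (Suc n) / ev n"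
      using exists_large_ratio_above_empty_interval[OF unbdd, of n2 r "c ^ k * A * r ^ s"] n1 n2 r
      by (fastforce simp: n2_def mult_ac)
    then show "\<exists>n\<ge>n0. r \<le> ev (Suc n) / ev n"
      by (auto simp: n2_def)
  qed
qed

section \<open>The renormalized limit of a convex inverse branch\<close>

lemma mult_growth_le_exp_sum:
  fixes s a :: "nat \<Rightarrow> real"
  assumes nonneg: "\<And>n. 0 \<le> s n" and growth: "\<And>n. s (Suc n) \<le> s n * (1 + a n)"
  shows "s n \<le> s 0 * exp (\<Sum>k<n. a k)"
proof (induction n)
  case (Suc n)
  have "s (Suc n) \<le> s n * exp (a n)"
    using growth[of n] mult_left_mono[OF exp_ge_add_one_self nonneg] by (rule order_trans)
  also have "\<dots> \<le> s 0 * exp (\<Sum>k<n. a k) * exp (a n)"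
    using Suc.IH by (rule mult_right_mono) simp
  finally show ?case
    by (simp add: exp_add mult.assoc)
qed simp

locale convex_branch =
  fixes R :: "real \<Rightarrow> real" and c b K :: real and f :: "real \<Rightarrow> real"
  assumes c_gt_1: "1 < c" and b_pos: "0 < b"
    and f_maps: "\<And>y. y \<in> {0..b} \<Longrightarrow> f y \<in> {0..b}"
    and f_0: "f 0 = 0"
    and R_f: "\<And>y. y \<in> {0..b} \<Longrightarrow> R (f y) = y"
    and f_b: "f b < b"
    and f_convex: "strictly_convex_on {0..b} f"
    and R_quadratic: "\<forall>\<^sub>F x in at_right 0. \<bar>R x - c * x\<bar> \<le> K * x\<^sup>2"
begin

lemma R_quadratic_near_0:
  obtains \<delta> where "0 < \<delta>" "0 \<le> K" "\<And>x. 0 < x \<Longrightarrow> x < \<delta> \<Longrightarrow> \<bar>R x - c * x\<bar> \<le> K * x\<^sup>2"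
proof -
  obtain \<delta> where \<delta>: "0 < \<delta>" "\<And>x. 0 < x \<Longrightarrow> x < \<delta> \<Longrightarrow> \<bar>R x - c * x\<bar> \<le> K * x\<^sup>2"
    using R_quadratic unfolding eventually_at_right_field by auto
  have "0 \<le> K * (\<delta> / 2)\<^sup>2"
    using \<delta>(2)[of "\<delta> / 2"] \<delta>(1) by (smt (verit) field_sum_of_halves)
  then have "0 \<le> K"
    using \<delta>(1) by (simp add: zero_le_mult_iff)
  with \<delta> that show ?thesis by blast
qed

lemma f_below_chord: "0 < x \<Longrightarrow> x < y \<Longrightarrow> y \<le> b \<Longrightarrow> f x < (x / y) * f y"
  using f_convex[unfolded strictly_convex_on_def, rule_format, of y 0 "x / y"]
  by (simp add: f_0)

lemma f_pos:
  assumes "0 < y" "y \<le> b"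
  shows "0 < f y"
proof -
  have "f y \<noteq> f 0"
    using R_f[of y] R_f[of 0] assms by force
  then show ?thesis
    using f_maps[of y] assms by (simp add: f_0 order_le_less)
qed

definition ratio :: real where "ratio = f b / b"

lemma ratio_pos: "0 < ratio" and ratio_lt_1: "ratio < 1"
  using f_pos[OF b_pos order_refl] f_b b_pos by (auto simp: ratio_def)

lemma f_le_ratio: "y \<in> {0..b} \<Longrightarrow> f y \<le> ratio * y"
  using f_below_chord[of y b] b_pos
  by (cases "y = 0 \<or> y = b") (auto simp: f_0 ratio_def field_simps)

lemma f_le_self: "y \<in> {0..b} \<Longrightarrow> f y \<le> y"
  using f_le_ratio[of y] mult_right_mono[OF less_imp_le[OF ratio_lt_1], of y] by auto

text \<open>By convexity the slope f z / z is nondecreasing, while R(x) = c x + O(x^2) forces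
  f z / z \<rightarrow> 1 / c as z \<rightarrow> 0+; hence f y / y \<ge> 1 / c.\<close>
lemma le_c_mult_f:
  assumes y: "y \<in> {0..b}"
  shows "y \<le> c * f y"
proof (rule ccontr)
  assume "\<not> y \<le> c * f y"
  then have lt: "c * f y < y" by simp
  moreover have "0 \<le> c * f y"
    using f_maps[OF y] c_gt_1 by simp
  ultimately have y_pos: "0 < y" by linarith
  define \<theta> where "\<theta> = c * f y / y"
  have \<theta>: "\<theta> < 1"
    using lt y_pos by (simp add: \<theta>_def)
  obtain \<delta> where \<delta>: "0 < \<delta>" "0 \<le> K" "\<And>x. 0 < x \<Longrightarrow> x < \<delta> \<Longrightarrow> \<bar>R x - c * x\<bar> \<le> K * x\<^sup>2"
    using R_quadratic_near_0 by blast
  define z where "z = min (y / 2) (min (\<delta> / 2) ((1 - \<theta>) / (K + 1)))"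
  have z: "0 < z" "z < y" "z < \<delta>" "z \<le> (1 - \<theta>) / (K + 1)"
    using y_pos \<delta> \<theta> by (auto simp: z_def)
  have zb: "z \<in> {0..b}"
    using z y by auto
  have fz: "0 < f z" "f z \<le> z"
    using f_pos[of z] f_le_self[OF zb] z y by auto
  have "z \<le> c * f z + K * (f z)\<^sup>2"
    using \<delta>(3)[of "f z"] fz z R_f[OF zb] by linarith
  also have "c * f z < \<theta> * z"
    using f_below_chord[of z y] z y c_gt_1 by (simp add: \<theta>_def field_simps)
  also have "K * (f z)\<^sup>2 \<le> K * z\<^sup>2"
    using fz \<delta>(2) by (intro mult_left_mono power_mono) auto
  finally have "(1 - \<theta>) * z < K * z * z"
    by (simp add: algebra_simps power2_eq_square)
  then have "1 - \<theta> < K * z"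
    using z(1) by simp
  also have "K * z \<le> K * ((1 - \<theta>) / (K + 1))"
    using z(4) \<delta>(2) by (rule mult_left_mono)
  also have "\<dots> \<le> 1 - \<theta>"
    using \<theta> \<delta>(2) by (simp add: field_simps)
  finally show False by simp
qed

lemma c_mult_f_le:
  obtains K' where "0 \<le> K'" "\<And>z. z \<in> {0..b} \<Longrightarrow> c * f z \<le> z * (1 + K' * f z)"
proof -
  obtain \<delta> where \<delta>: "0 < \<delta>" "0 \<le> K" "\<And>x. 0 < x \<Longrightarrow> x < \<delta> \<Longrightarrow> \<bar>R x - c * x\<bar> \<le> K * x\<^sup>2"
    using R_quadratic_near_0 by blast
  define K' where "K' = max K (c * b / \<delta>\<^sup>2)"
  have "c * b = (c * b / \<delta>\<^sup>2) * \<delta>\<^sup>2"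
    using \<delta>(1) by simp
  also have "\<dots> \<le> K' * \<delta>\<^sup>2"
    by (intro mult_right_mono) (auto simp: K'_def)
  finally have K': "0 \<le> K'" "K \<le> K'" "c * b \<le> K' * \<delta>\<^sup>2"
    using \<delta> by (auto simp: K'_def)
  have "c * f z \<le> z * (1 + K' * f z)" if z: "z \<in> {0..b}" for z
  proof -
    have fz: "0 \<le> f z" "f z \<le> z" "f z \<le> b"
      using f_maps[OF z] f_le_self[OF z] by auto
    have "c * f z \<le> z + K' * (f z)\<^sup>2"
    proof (cases "f z < \<delta>")
      case True
      show ?thesis
      proof (cases "f z = 0")
        case False
        then have "c * f z \<le> z + K * (f z)\<^sup>2"
          using \<delta>(3)[of "f z"] True fz R_f[OF z] by linarith
        also have "\<dots> \<le> z + K' * (f z)\<^sup>2"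
          using K' by (simp add: mult_right_mono)
        finally show ?thesis .
      qed (use z K' in simp)
    next
      case False
      have "c * f z \<le> c * b"
        using fz c_gt_1 by simp
      also have "\<dots> \<le> K' * (f z)\<^sup>2"
        using K' False \<delta>(1) by (smt (verit) mult_left_mono power_mono)
      finally show ?thesis
        using z by simp
    qed
    also have "K' * (f z)\<^sup>2 \<le> K' * (z * f z)"
      using fz K' by (intro mult_left_mono) (auto simp: power2_eq_square intro: mult_right_mono)
    finally show ?thesis
      by (simp add: algebra_simps)
  qed
  with K' that show ?thesis by blast
qed

lemma f_slope_mono: "0 < x \<Longrightarrow> x \<le> y \<Longrightarrow> y \<le> b \<Longrightarrow> y * f x \<le> x * f y"
  using f_below_chord[of x y] by (cases "x = y") (auto simp: field_simps)

lemma funpow_f_in: "y \<in> {0..b} \<Longrightarrow> (f ^^ n) y \<in> {0..b}"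
  by (induction n) (simp_all add: f_maps del: atLeastAtMost_iff)

lemma funpow_f_pos: "0 < y \<Longrightarrow> y \<le> b \<Longrightarrow> 0 < (f ^^ n) y"
  by (induction n) (use f_pos funpow_f_in in fastforce)+

lemma funpow_f_le_ratio: "y \<in> {0..b} \<Longrightarrow> (f ^^ n) y \<le> ratio ^ n * y"
proof (induction n)
  case (Suc n)
  have "(f ^^ Suc n) y \<le> ratio * (f ^^ n) y"
    using f_le_ratio funpow_f_in Suc.prems by simp
  also have "\<dots> \<le> ratio ^ Suc n * y"
    using Suc ratio_pos by (simp add: mult_left_mono)
  finally show ?case .
qed simp

lemma funpow_f_slope_mono:
  assumes "0 < x" "x \<le> y" "y \<le> b"
  shows "y * (f ^^ n) x \<le> x * (f ^^ n) y"
proof (induction n)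
  case (Suc n)
  define a a' where "a = (f ^^ n) x" and "a' = (f ^^ n) y"
  have a: "0 < a" "a' \<le> b"
    using funpow_f_pos[of x n] funpow_f_in[of y n] assms by (auto simp: a_def a'_def)
  have "y * a \<le> x * a'"
    using Suc.IH by (simp add: a_def a'_def)
  also have "\<dots> \<le> y * a'"
    using assms a funpow_f_in[of y n] by (intro mult_right_mono) (auto simp: a'_def)
  finally have "a \<le> a'"
    using assms by simp
  then have "a' * f a \<le> a * f a'"
    using f_slope_mono a by blast
  with \<open>y * a \<le> x * a'\<close> have "(y * a) * (a' * f a) \<le> (x * a') * (a * f a')"
  proof (rule mult_mono)
    show "0 \<le> x * a'" "0 \<le> a' * f a"
      using a assms f_pos[of a] \<open>a \<le> a'\<close> by auto
  qed
  then have "(a * a') * (y * f a) \<le> (a * a') * (x * f a')"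
    by (simp add: ac_simps)
  then have "y * f a \<le> x * f a'"
    using a \<open>a \<le> a'\<close> by (simp add: mult_le_cancel_left_pos)
  then show ?case
    by (simp add: a_def a'_def)
qed simp

lemma incseq_scaled_funpow_f: "y \<in> {0..b} \<Longrightarrow> incseq (\<lambda>n. c ^ n * (f ^^ n) y)"
  using le_c_mult_f[OF funpow_f_in] c_gt_1
  by (intro incseq_SucI) (simp add: mult.assoc mult_left_mono)

lemma scaled_funpow_f_bounded:
  assumes y: "y \<in> {0..b}"
  shows "\<exists>B. \<forall>n. c ^ n * (f ^^ n) y \<le> B"
proof -
  obtain K' where K': "0 \<le> K'" "\<And>z. z \<in> {0..b} \<Longrightarrow> c * f z \<le> z * (1 + K' * f z)"
    using c_mult_f_le by blast
  define s a where "s n = c ^ n * (f ^^ n) y" and "a n = K' * b * ratio ^ n" for n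
  have growth: "s (Suc n) \<le> s n * (1 + a n)" for n
  proof -
    have z: "(f ^^ n) y \<in> {0..b}"
      using funpow_f_in[OF y] .
    have "f ((f ^^ n) y) \<le> ratio ^ Suc n * y"
      using funpow_f_le_ratio[OF y, of "Suc n"] by simp
    also have "\<dots> \<le> ratio ^ n * b"
      using y ratio_pos ratio_lt_1 by (intro mult_mono) (auto simp: power_Suc2 mult_le_one)
    finally have "K' * f ((f ^^ n) y) \<le> K' * (ratio ^ n * b)"
      using K'(1) by (rule mult_left_mono)
    then have "1 + K' * f ((f ^^ n) y) \<le> 1 + a n"
      by (simp add: a_def mult_ac)
    then have "c * f ((f ^^ n) y) \<le> (f ^^ n) y * (1 + a n)"
      using K'(2)[OF z] z by (smt (verit) atLeastAtMost_iff mult_left_mono)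
    then show ?thesis
      using c_gt_1 by (simp add: s_def mult.assoc mult_left_mono)
  qed
  have "s n \<le> s 0 * exp (\<Sum>k<n. a k)" for n
  proof (rule mult_growth_le_exp_sum[of s a])
    show "0 \<le> s n" for n
      using funpow_f_in[OF y] c_gt_1 by (simp add: s_def)
  qed (rule growth)
  also have "s 0 * exp (\<Sum>k<n. a k) \<le> y * exp (suminf a)" for n
  proof -
    have "summable a"
      unfolding a_def using ratio_pos ratio_lt_1 by (intro summable_mult summable_geometric) simp
    then have "(\<Sum>k<n. a k) \<le> suminf a"
      using K'(1) b_pos ratio_pos by (intro sum_le_suminf) (auto simp: a_def ratio_lt_1)
    then show ?thesis
      using y by (simp add: s_def mult_left_mono)
  qed
  finally show ?thesis
    unfolding s_def by blast
qed

definition Phi :: "real \<Rightarrow> real" where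
  "Phi y = lim (\<lambda>n. c ^ n * (f ^^ n) y)"

lemma scaled_funpow_f_tendsto_Phi:
  assumes y: "y \<in> {0..b}"
  shows "(\<lambda>n. c ^ n * (f ^^ n) y) \<longlonglongrightarrow> Phi y" and "c ^ n * (f ^^ n) y \<le> Phi y"
proof -
  obtain B where "\<forall>n. c ^ n * (f ^^ n) y \<le> B"
    using scaled_funpow_f_bounded[OF y] by blast
  then obtain l where l: "(\<lambda>n. c ^ n * (f ^^ n) y) \<longlonglongrightarrow> l" "\<forall>n. c ^ n * (f ^^ n) y \<le> l"
    using incseq_convergent[OF incseq_scaled_funpow_f[OF y]] by blast
  moreover have "Phi y = l"
    unfolding Phi_def using l(1) by (rule limI)
  ultimately show "(\<lambda>n. c ^ n * (f ^^ n) y) \<longlonglongrightarrow> Phi y" and "c ^ n * (f ^^ n) y \<le> Phi y"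
    by auto
qed

lemma le_Phi: "y \<in> {0..b} \<Longrightarrow> y \<le> Phi y"
  using scaled_funpow_f_tendsto_Phi(2)[of y 0] by simp

lemma Phi_0: "Phi 0 = 0"
proof -
  have "(f ^^ n) 0 = 0" for n
    by (induction n) (simp_all add: f_0)
  then show ?thesis
    by (simp add: Phi_def)
qed

lemma c_mult_Phi_f:
  assumes y: "y \<in> {0..b}"
  shows "c * Phi (f y) = Phi y"
proof -
  have "(\<lambda>n. c * (c ^ n * (f ^^ n) (f y))) \<longlonglongrightarrow> c * Phi (f y)"
    using scaled_funpow_f_tendsto_Phi(1)[OF f_maps[OF y]] by (rule tendsto_mult_left)
  moreover have "(\<lambda>n. c * (c ^ n * (f ^^ n) (f y))) = (\<lambda>n. c ^ Suc n * (f ^^ Suc n) y)"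
    by (simp add: funpow_Suc_right mult.assoc del: funpow.simps)
  ultimately have "(\<lambda>n. c ^ n * (f ^^ n) y) \<longlonglongrightarrow> c * Phi (f y)"
    by (simp add: LIMSEQ_imp_Suc)
  then show ?thesis
    using scaled_funpow_f_tendsto_Phi(1)[OF y] LIMSEQ_unique by blast
qed

lemma Phi_strict_mono:
  assumes "0 \<le> x" "x < y" "y \<le> b"
  shows "Phi x < Phi y"
proof (cases "x = 0")
  case True
  then show ?thesis
    using le_Phi[of y] assms by (simp add: Phi_0)
next
  case False
  have "y * (c ^ n * (f ^^ n) x) \<le> x * (c ^ n * (f ^^ n) y)" for n
    using funpow_f_slope_mono[of x y n] assms False c_gt_1
    by (simp add: mult.left_commute mult_left_mono)
  moreover have "(\<lambda>n. y * (c ^ n * (f ^^ n) x)) \<longlonglongrightarrow> y * Phi x"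
    and "(\<lambda>n. x * (c ^ n * (f ^^ n) y)) \<longlonglongrightarrow> x * Phi y"
    using assms by (intro tendsto_mult_left scaled_funpow_f_tendsto_Phi(1); simp)+
  ultimately have "y * Phi x \<le> x * Phi y"
    by (intro LIMSEQ_le) auto
  moreover have "x * Phi y < y * Phi y"
    using le_Phi[of y] assms by (intro mult_strict_right_mono) auto
  ultimately have "y * Phi x < y * Phi y"
    by linarith
  then show ?thesis
    using assms by simp
qed

lemma Phi_mono: "0 \<le> x \<Longrightarrow> x \<le> y \<Longrightarrow> y \<le> b \<Longrightarrow> Phi x \<le> Phi y"
  using Phi_strict_mono[of x y] by (cases "x = y") auto

text \<open>The identity Phi(b) = c Phi(f b) says that Phi maps [f b, b] onto an interval of ratio c.\<close>
lemma scaled_Phi_outside_gaps: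
  assumes Mm: "f b \<le> M" "M \<le> m" "m \<le> b"
    and y: "f b \<le> y \<and> y \<le> M \<or> m \<le> y \<and> y \<le> b"
  shows "outside_gaps c (c * Phi M) (c * Phi m) (c ^ Suc n * Phi y)"
proof -
  have fb: "0 \<le> f b" "f b \<le> b"
    using f_maps[of b] b_pos by auto
  have Phi_b: "Phi b = c * Phi (f b)"
    using c_mult_Phi_f[of b] b_pos by simp
  have nonneg: "0 \<le> c * Phi M" "0 \<le> c * Phi m"
    using le_Phi[of M] le_Phi[of m] fb Mm c_gt_1 by auto
  from y show ?thesis
  proof
    assume y: "f b \<le> y \<and> y \<le> M"
    have "Phi y \<le> Phi M"
      using y fb Mm by (intro Phi_mono) auto
    moreover have "Phi m \<le> c * Phi y"
    proof -
      have "Phi m \<le> Phi b"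
        using fb Mm by (intro Phi_mono) auto
      also have "\<dots> \<le> c * Phi y"
        unfolding Phi_b using fb y Mm c_gt_1 by (intro mult_left_mono Phi_mono) auto
      finally show ?thesis .
    qed
    ultimately show ?thesis
      using c_gt_1 nonneg by (intro outside_gapsI[where t = n]) (auto simp: mult_ac)
  next
    assume y: "m \<le> y \<and> y \<le> b"
    have "Phi y \<le> Phi b"
      using fb Mm y by (intro Phi_mono) auto
    also have "\<dots> \<le> c * Phi M"
      unfolding Phi_b using fb Mm c_gt_1 by (intro mult_left_mono Phi_mono) auto
    finally have "Phi y \<le> c * Phi M" .
    moreover have "Phi m \<le> Phi y"
      using y fb Mm by (intro Phi_mono) auto
    ultimately show ?thesis
      using c_gt_1 nonneg by (intro outside_gapsI[where t = "Suc n"]) (auto simp: mult_ac)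
  qed
qed

end

section \<open>Inverse branches of R\<close>

lemma phi_word_append: "phi_word \<phi> (w @ u) = phi_word \<phi> w \<circ> phi_word \<phi> u"
  by (induction w) auto

locale inverse_branches =
  fixes R :: "real \<Rightarrow> real" and c b K :: real and L J :: nat and \<phi> :: "nat \<Rightarrow> real \<Rightarrow> real"
  assumes R_0: "R 0 = 0" and c_gt_1: "1 < c"
    and R_quadratic: "\<forall>\<^sub>F x in at_right 0. \<bar>R x - c * x\<bar> \<le> K * x\<^sup>2"
    and preimage: "{x. R x \<in> {0..b}} \<subseteq> {0..b}"
    and branches: "partial_inverses R b L \<phi>"
    and branch_0_b: "\<phi> 0 b < b"
    and branch_0_convex: "strictly_convex_on {0..b} (\<phi> 0)"
    and J_less: "J < L"
    and Sup_less_Inf: "Sup (\<phi> J ` {0..b}) < Inf (\<phi> (Suc J) ` {0..b})"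
begin

definition M :: real where "M = Sup (\<phi> J ` {0..b})"
definition m :: real where "m = Inf (\<phi> (Suc J) ` {0..b})"

lemma R_branch: "j \<le> L \<Longrightarrow> y \<in> {0..b} \<Longrightarrow> R (\<phi> j y) = y"
  using branches by (simp add: partial_inverses_def)

lemma branch_maps:
  assumes "j \<le> L" "y \<in> {0..b}"
  shows "\<phi> j y \<in> {0..b}"
proof -
  have "\<phi> j y \<in> {x. R x \<in> {0..b}}"
    using R_branch assms by simp
  then show ?thesis
    using preimage by blast
qed

lemma branch_0_0: "\<phi> 0 0 = 0" and b_nonneg: "0 \<le> b"
proof -
  obtain y where y: "y \<in> {0..b}" "\<phi> 0 y = 0"
    using branches by (auto simp: partial_inverses_def)
  then have "y = 0"
    using R_branch[of 0 y] R_0 by simp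
  with y show "\<phi> 0 0 = 0" "0 \<le> b" by auto
qed

lemma b_pos: "0 < b"
  using b_nonneg branch_0_b branch_0_0 by (cases "b = 0") auto

lemma branch_le:
  assumes "i < j" "j \<le> L" "x \<in> {0..b}" "y \<in> {0..b}"
  shows "\<phi> i x \<le> \<phi> j y"
  using assms
proof (induction j arbitrary: y)
  case (Suc j)
  have ordered: "\<phi> j x' \<le> \<phi> (Suc j) y'" if "x' \<in> {0..b}" "y' \<in> {0..b}" for x' y'
    using branches Suc.prems that by (auto simp: partial_inverses_def)
  show ?case
  proof (cases "i = j")
    case False
    then have "\<phi> i x \<le> \<phi> j b"
      using Suc b_nonneg by auto
    also have "\<dots> \<le> \<phi> (Suc j) y"
      using ordered Suc.prems b_nonneg by auto
    finally show ?thesis .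
  qed (use ordered Suc.prems in auto)
qed simp

lemma branch_le_Sup:
  assumes "i \<le> j" "j \<le> L" "x \<in> {0..b}"
  shows "\<phi> i x \<le> Sup (\<phi> j ` {0..b})"
proof -
  have "bdd_above (\<phi> j ` {0..b})"
    using branch_maps[OF assms(2)] by (intro bdd_aboveI2[where M = b]) auto
  moreover have "\<phi> i x \<le> \<phi> j (if i = j then x else b)"
    using branch_le[of i j x b] assms b_nonneg by auto
  ultimately show ?thesis
    using assms b_nonneg by (intro cSUP_upper2) auto
qed

lemma Inf_le_branch:
  assumes "i \<le> j" "j \<le> L" "y \<in> {0..b}"
  shows "Inf (\<phi> i ` {0..b}) \<le> \<phi> j y"
proof -
  have "bdd_below (\<phi> i ` {0..b})"
    using branch_maps[of i] assms by (intro bdd_belowI2[where m = 0]) auto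
  moreover have "\<phi> i (if i = j then y else b) \<le> \<phi> j y"
    using branch_le[of i j b y] assms b_nonneg by auto
  ultimately show ?thesis
    using assms b_nonneg by (intro cINF_lower2) auto
qed

lemma branch_le_M: "a \<le> J \<Longrightarrow> z \<in> {0..b} \<Longrightarrow> \<phi> a z \<le> M"
  unfolding M_def using branch_le_Sup J_less by simp

lemma m_le_branch: "Suc J \<le> a \<Longrightarrow> a \<le> L \<Longrightarrow> z \<in> {0..b} \<Longrightarrow> m \<le> \<phi> a z"
  unfolding m_def using Inf_le_branch by simp

lemma M_less_m: "M < m"
  using Sup_less_Inf by (simp add: M_def m_def)

lemma branch_0_b_le_M: "\<phi> 0 b \<le> M"
  using branch_le_M[of 0 b] b_nonneg by simp

lemma m_le_b: "m \<le> b"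
  using m_le_branch[of "Suc J" b] branch_maps[of "Suc J" b] J_less b_nonneg by auto

sublocale convex_branch R c b K "\<phi> 0"
  using c_gt_1 b_pos branch_maps[of 0] branch_0_0 R_branch[of 0] branch_0_b branch_0_convex R_quadratic
  by unfold_locales auto

lemma M_pos: "0 < M"
  using branch_0_b_le_M f_pos[OF b_pos order_refl] by simp

lemma M_m_in: "M \<in> {0..b}" "m \<in> {0..b}"
  using M_pos M_less_m m_le_b by auto

lemma Phi_M_pos: "0 < Phi M" and Phi_M_less_Phi_m: "Phi M < Phi m"
  using le_Phi[of M] M_m_in M_pos Phi_strict_mono[of M m] M_less_m m_le_b by auto

lemma phi_word_maps: "set w \<subseteq> {..L} \<Longrightarrow> y \<in> {0..b} \<Longrightarrow> phi_word \<phi> w y \<in> {0..b}"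
  by (induction w) (auto simp del: atLeastAtMost_iff intro: branch_maps)

lemma scaled_funpow_tendsto:
  "y \<in> {0..b} \<Longrightarrow> (\<lambda>n. c ^ n * (\<phi> 0 ^^ (n - 1)) y) \<longlonglongrightarrow> c * Phi y"
  by (rule LIMSEQ_imp_Suc)
    (simp add: mult.assoc tendsto_mult_left scaled_funpow_f_tendsto_Phi)

lemma phi_word_value_cases:
  assumes e: "e \<in> {0..b}" and w: "set w \<subseteq> {..L}"
  shows "(\<exists>q. c ^ (p + length w) * Phi (phi_word \<phi> w e) = c ^ q * Phi e) \<or>
    outside_gaps c (c * Phi M) (c * Phi m) (c ^ (p + length w) * Phi (phi_word \<phi> w e))"
  using w
proof (induction w)
  case (Cons a w)
  define z where "z = phi_word \<phi> w e"
  have z: "z \<in> {0..b}" and a: "a \<le> L"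
    using phi_word_maps[of w e] Cons.prems e by (auto simp: z_def)
  show ?case
  proof (cases "a = 0")
    case True
    then have eq: "c ^ (p + length (a # w)) * Phi (phi_word \<phi> (a # w) e) = c ^ (p + length w) * Phi z"
      using c_mult_Phi_f[OF z] by (simp add: z_def mult.assoc)
    have "(\<exists>q. c ^ (p + length w) * Phi z = c ^ q * Phi e) \<or>
        outside_gaps c (c * Phi M) (c * Phi m) (c ^ (p + length w) * Phi z)"
      using Cons by (simp add: z_def)
    then show ?thesis
      unfolding eq .
  next
    case False
    have "\<phi> 0 b \<le> \<phi> a z \<and> \<phi> a z \<le> M \<or> m \<le> \<phi> a z \<and> \<phi> a z \<le> b"
    proof (cases "a \<le> J")
      case True
      then show ?thesis
        using branch_le[of 0 a b z] branch_le_M[OF True z] False a z b_nonneg by auto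
    next
      case False
      then show ?thesis
        using m_le_branch[of a z] branch_maps[OF a z] a z by auto
    qed
    then have "outside_gaps c (c * Phi M) (c * Phi m) (c ^ Suc (p + length w) * Phi (\<phi> a z))"
      using branch_0_b_le_M M_less_m m_le_b by (intro scaled_Phi_outside_gaps) auto
    then show ?thesis
      by (simp add: z_def)
  qed
qed auto

lemma graph_spectrum_as_words:
  fixes \<sigma> :: "nat \<Rightarrow> real set" and E :: "real set"
  assumes \<sigma>0: "\<sigma> 0 \<subseteq> {0..b}" and E: "E \<subseteq> {0..b}"
    and \<sigma>_dec: "\<And>i. \<sigma> (Suc i) \<subseteq> {z. R z \<in> \<sigma> i} \<union> E"
  shows "x \<in> \<sigma> i \<union> E \<Longrightarrow>
    \<exists>u e. e \<in> \<sigma> 0 \<union> E \<and> set u \<subseteq> {..L} \<and> length u \<le> i \<and> x = phi_word \<phi> u e"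
proof (induction i arbitrary: x)
  case 0
  then show ?case
    by (intro exI[of _ "[]"] exI[of _ x]) auto
next
  case (Suc i)
  show ?case
  proof (cases "x \<in> E")
    case True
    then show ?thesis
      by (intro exI[of _ "[]"] exI[of _ x]) auto
  next
    case False
    then have "R x \<in> \<sigma> i"
      using Suc.prems \<sigma>_dec by blast
    then obtain u e where ue: "e \<in> \<sigma> 0 \<union> E" "set u \<subseteq> {..L}" "length u \<le> i"
      and Rx: "R x = phi_word \<phi> u e"
      using Suc.IH by blast
    have "R x \<in> {0..b}"
      unfolding Rx using ue \<sigma>0 E by (intro phi_word_maps) auto
    then obtain j y where j: "j \<le> L" "y \<in> {0..b}" and x: "x = \<phi> j y"
      using branches unfolding partial_inverses_def by blast
    have "y = R x"
      using R_branch[OF j] x by simp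
    with x ue j show ?thesis
      by (intro exI[of _ "j # u"] exI[of _ e]) (auto simp: Rx)
  qed
qed

lemma decimation_value_cases:
  fixes \<sigma> :: "nat \<Rightarrow> real set" and E :: "real set"
  assumes \<sigma>0: "\<sigma> 0 \<subseteq> {0..b}" and E: "E \<subseteq> {0..b}"
    and \<sigma>_dec: "\<And>i. \<sigma> (Suc i) \<subseteq> {z. R z \<in> \<sigma> i} \<union> E"
    and v: "v \<in> decimation_values c L \<phi> \<sigma> E"
  shows "(\<exists>e\<in>\<sigma> 0 \<union> E. \<exists>q. v = c ^ q * Phi e) \<or> outside_gaps c (c * Phi M) (c * Phi m) v"
proof -
  obtain i w x l where x: "x \<in> \<sigma> i \<union> E" and w: "set w \<subseteq> {..L}"
    and l: "(\<lambda>n. c ^ (n + length w) * (\<phi> 0 ^^ n) (phi_word \<phi> w x)) \<longlonglongrightarrow> l"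
    and v: "v = c ^ i * l"
    using v unfolding decimation_values_def by blast
  obtain u e where ue: "e \<in> \<sigma> 0 \<union> E" "set u \<subseteq> {..L}" "length u \<le> i"
    and x_eq: "x = phi_word \<phi> u e"
    using graph_spectrum_as_words[OF \<sigma>0 E \<sigma>_dec x] by blast
  have e: "e \<in> {0..b}"
    using ue \<sigma>0 E by auto
  have "phi_word \<phi> w x \<in> {0..b}"
    unfolding x_eq using w ue e by (intro phi_word_maps) auto
  then have "(\<lambda>n. c ^ (n + length w) * (\<phi> 0 ^^ n) (phi_word \<phi> w x)) \<longlonglongrightarrow>
      c ^ length w * Phi (phi_word \<phi> w x)"
    using tendsto_mult_left[OF scaled_funpow_f_tendsto_Phi(1), of _ "c ^ length w"]
    by (simp add: power_add mult_ac)
  with l have "l = c ^ length w * Phi (phi_word \<phi> w x)"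
    by (rule LIMSEQ_unique)
  with v ue(3) have "v = c ^ ((i - length u) + length (w @ u)) * Phi (phi_word \<phi> (w @ u) e)"
    by (simp add: x_eq phi_word_append power_add[symmetric])
  moreover have "set (w @ u) \<subseteq> {..L}"
    using w ue by auto
  ultimately show ?thesis
    using phi_word_value_cases[OF e, of "w @ u" "i - length u"] ue(1) by auto
qed

end

theorem theorem4p1:
  fixes R :: "real \<Rightarrow> real" and c b :: real and L J :: nat
    and \<phi> :: "nat \<Rightarrow> real \<Rightarrow> real" and \<sigma> :: "nat \<Rightarrow> real set" and E :: "real set"
    and ev :: "nat \<Rightarrow> real"
  assumes R_rat: "real_rational_fun R"
    and R0: "R 0 = 0"
    and c_def: "(R has_real_derivative c) (at 0)"
    and c_gt: "c > 1"
    \<comment> \<open>graph spectra: finite, and the graph-level spectral decimation relation\<close>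
    and \<sigma>_fin: "\<And>i. finite (\<sigma> i)"
    and \<sigma>0: "\<sigma> 0 \<subseteq> {0..b}"
    and \<sigma>_dec: "\<And>i. \<sigma> (Suc i) \<subseteq> {z. R z \<in> \<sigma> i} \<union> E"
    and E_fin: "finite E"
    and E_le_b: "E \<subseteq> {0..b}"
    \<comment> \<open>the eigenvalues of Delta, listed with multiplicity, form an unbounded nondecreasing sequence\<close>
    and ev_nonneg: "\<And>k. 0 \<le> ev k"
    and ev_mono: "mono ev"
    and ev_unbdd: "filterlim ev at_top sequentially"
    and sd: "admits_spectral_decimation ev c L \<phi> \<sigma> E"
    and preimage: "{x. R x \<in> {0..b}} \<subseteq> {0..b}"
    and pinv: "partial_inverses R b L \<phi>"
    and phi0_b: "\<phi> 0 b < b"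
    and phi0_convex: "strictly_convex_on {0..b} (\<phi> 0)"
    and J_lt: "J < L"
    and M_lt_m: "Sup (\<phi> J ` {0..b}) < Inf (\<phi> (Suc J) ` {0..b})"
  shows "has_spectral_gaps ev \<and>
    (\<exists>a\<^sub>M a\<^sub>m. ((\<lambda>n. c ^ n * (\<phi> 0 ^^ (n - 1)) (Sup (\<phi> J ` {0..b}))) \<longlonglongrightarrow> a\<^sub>M) \<and>
             ((\<lambda>n. c ^ n * (\<phi> 0 ^^ (n - 1)) (Inf (\<phi> (Suc J) ` {0..b}))) \<longlonglongrightarrow> a\<^sub>m) \<and>
             (\<exists>N::nat. \<forall>k::nat.
                finite {x \<in> range ev. c ^ k * a\<^sub>M < x \<and> x < c ^ k * a\<^sub>m} \<and>
                card {x \<in> range ev. c ^ k * a\<^sub>M < x \<and> x < c ^ k * a\<^sub>m} \<le> N))"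
proof -
  obtain K where "\<forall>\<^sub>F x in at 0. \<bar>R x - c * x\<bar> \<le> K * x\<^sup>2"
    using real_rational_fun_quadratic_remainder[OF R_rat R0 c_def] by blast
  then have "\<forall>\<^sub>F x in at_right 0. \<bar>R x - c * x\<bar> \<le> K * x\<^sup>2"
    by (simp add: eventually_at_split)
  then interpret inverse_branches R c b K L J \<phi>
    using R0 c_gt preimage pinv phi0_b phi0_convex J_lt M_lt_m by unfold_locales
  have "\<And>v. v \<in> range ev \<Longrightarrow>
      (\<exists>e\<in>\<sigma> 0 \<union> E. \<exists>q. v = c ^ q * Phi e) \<or> outside_gaps c (c * Phi M) (c * Phi m) v"
    using sd decimation_value_cases[OF \<sigma>0 E_le_b \<sigma>_dec]
    unfolding admits_spectral_decimation_def by blast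
  then obtain N where counts: "\<forall>k. finite {v \<in> range ev. c ^ k * (c * Phi M) < v \<and> v < c ^ k * (c * Phi m)} \<and>
      card {v \<in> range ev. c ^ k * (c * Phi M) < v \<and> v < c ^ k * (c * Phi m)} \<le> N"
    using bounded_counts_in_gaps[OF c_gt _ _, of "c * Phi M" "\<sigma> 0 \<union> E"] \<sigma>_fin E_fin Phi_M_pos c_gt
    by fastforce
  then have "has_spectral_gaps ev"
    using Phi_M_pos Phi_M_less_Phi_m c_gt
    by (intro has_spectral_gaps_of_bounded_counts[OF c_gt _ _ ev_unbdd,
          where A = "c * Phi M" and B = "c * Phi m" and N = N]) auto
  with counts scaled_funpow_tendsto[OF M_m_in(1)] scaled_funpow_tendsto[OF M_m_in(2)] show ?thesis
    unfolding M_def m_def by blast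
qed

end
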